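(* Let $\mathbb{K}$ be an algebraically closed field and let $H$ be a pointed Hopf algebra over $\mathbb{K}$ of discrete corepresentation type. If $a\neq b$ are grouplike elements of $H$ such that there exist non-trivial skew-primitive elements $x\in P(1,a)$ and $y\in P(1,b)$, then $ab=ba$.
   Context: $P(g,h)=\{x\in H:\Delta(x)=g\otimes x+x\otimes h\}$; a skew-primitive is non-trivial if it does not lie in $\mathbb{K}(g-h)$. $H$ has discrete corepresentation type if for every dimension vector (finitely supported function $G(H)\to\mathbb{Z}_{\ge0}$ of composition multiplicities of the simple comodules $\mathbb{K}g$) there are only finitely many isomorphism classes of indecomposable finite-dimensional $H$-comodules with that dimension vector. *)

theory Defs
  imports "HOL-Computational_Algebra.Polynomial"
begin

text \<open>A Hopf algebra H over a field 'k is modelled on a type 'h :: ring_1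
 (the algebra structure) together with a scalar multiplication sc making it a 'k-vector
 space and a 'k-algebra. An element of H \<otimes> H is represented by a finite list of pairs
 [(a1,b1),...] standing for the sum of ai \<otimes> bi. Two such lists represent the same
 tensor iff every bilinear form H \<times> H \<rightarrow> 'k takes the same value on them (bilinear forms
 separate points of H \<otimes> H over a field). Similarly trilinear forms for H \<otimes> H \<otimes> H.\<close>

definition bilin :: "('k::field \<Rightarrow> 'h::ab_group_add \<Rightarrow> 'h) \<Rightarrow> ('h \<Rightarrow> 'h \<Rightarrow> 'k) \<Rightarrow> bool" where
  "bilin sc f \<longleftrightarrow>
     (\<forall>a a' b. f (a + a') b = f a b + f a' b) \<and>
     (\<forall>a b b'. f a (b + b') = f a b + f a b') \<and>
     (\<forall>c a b. f (sc c a) b = c * f a b \<and> f a (sc c b) = c * f a b)"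

definition trilin :: "('k::field \<Rightarrow> 'h::ab_group_add \<Rightarrow> 'h) \<Rightarrow> ('h \<Rightarrow> 'h \<Rightarrow> 'h \<Rightarrow> 'k) \<Rightarrow> bool" where
  "trilin sc f \<longleftrightarrow>
     (\<forall>a a' b d. f (a + a') b d = f a b d + f a' b d) \<and>
     (\<forall>a b b' d. f a (b + b') d = f a b d + f a b' d) \<and>
     (\<forall>a b d d'. f a b (d + d') = f a b d + f a b d') \<and>
     (\<forall>c a b d. f (sc c a) b d = c * f a b d \<and> f a (sc c b) d = c * f a b d
                \<and> f a b (sc c d) = c * f a b d)"

definition teq :: "('k::field \<Rightarrow> 'h::ab_group_add \<Rightarrow> 'h) \<Rightarrow> ('h \<times> 'h) list \<Rightarrow> ('h \<times> 'h) list \<Rightarrow> bool" where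
  "teq sc L M \<longleftrightarrow> (\<forall>f. bilin sc f \<longrightarrow>
      (\<Sum>(a,b)\<leftarrow>L. f a b) = (\<Sum>(a,b)\<leftarrow>M. f a b))"

definition hopf_algebra ::
  "('k::field \<Rightarrow> 'h::ring_1 \<Rightarrow> 'h) \<Rightarrow> ('h \<Rightarrow> ('h \<times> 'h) list) \<Rightarrow> ('h \<Rightarrow> 'k) \<Rightarrow> ('h \<Rightarrow> 'h) \<Rightarrow> bool" where
  "hopf_algebra sc D e S \<longleftrightarrow>
     vector_space sc \<and>
     (\<forall>c x y. sc c (x * y) = sc c x * y \<and> sc c (x * y) = x * sc c y) \<and>
     \<comment> \<open>D and e are linear\<close>
     (\<forall>x y. teq sc (D (x + y)) (D x @ D y)) \<and>
     (\<forall>c x. teq sc (D (sc c x)) (map (\<lambda>(a,b). (sc c a, b)) (D x))) \<and>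
     (\<forall>x y. e (x + y) = e x + e y) \<and> (\<forall>c x. e (sc c x) = c * e x) \<and>
     \<comment> \<open>coassociativity: (D \<otimes> id) D = (id \<otimes> D) D\<close>
     (\<forall>x f. trilin sc f \<longrightarrow>
        (\<Sum>(a,b)\<leftarrow>D x. \<Sum>(c,d)\<leftarrow>D a. f c d b) = (\<Sum>(a,b)\<leftarrow>D x. \<Sum>(c,d)\<leftarrow>D b. f a c d)) \<and>
     \<comment> \<open>counit axioms\<close>
     (\<forall>x. (\<Sum>(a,b)\<leftarrow>D x. sc (e a) b) = x \<and> (\<Sum>(a,b)\<leftarrow>D x. sc (e b) a) = x) \<and>
     \<comment> \<open>D and e are algebra maps\<close>
     teq sc (D 1) [(1, 1)] \<and>
     (\<forall>x y. teq sc (D (x * y)) [(a * c, b * d). (a,b) \<leftarrow> D x, (c,d) \<leftarrow> D y]) \<and>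
     e 1 = 1 \<and> (\<forall>x y. e (x * y) = e x * e y) \<and>
     \<comment> \<open>antipode: linear, and S * id = id * S = unit \<circ> counit\<close>
     (\<forall>x y. S (x + y) = S x + S y) \<and> (\<forall>c x. S (sc c x) = sc c (S x)) \<and>
     (\<forall>x. (\<Sum>(a,b)\<leftarrow>D x. S a * b) = sc (e x) 1 \<and> (\<Sum>(a,b)\<leftarrow>D x. a * S b) = sc (e x) 1)"

definition grouplike :: "('k::field \<Rightarrow> 'h::ring_1 \<Rightarrow> 'h) \<Rightarrow> ('h \<Rightarrow> ('h \<times> 'h) list) \<Rightarrow> 'h \<Rightarrow> bool" where
  "grouplike sc D g \<longleftrightarrow> g \<noteq> 0 \<and> teq sc (D g) [(g, g)]"

definition skew_prim :: "('k::field \<Rightarrow> 'h::ring_1 \<Rightarrow> 'h) \<Rightarrow> ('h \<Rightarrow> ('h \<times> 'h) list) \<Rightarrow> 'h \<Rightarrow> 'h \<Rightarrow> 'h set" where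
  "skew_prim sc D g h = {x. teq sc (D x) [(g, x), (x, h)]}"

definition nontrivial_skew_prim ::
  "('k::field \<Rightarrow> 'h::ring_1 \<Rightarrow> 'h) \<Rightarrow> ('h \<Rightarrow> ('h \<times> 'h) list) \<Rightarrow> 'h \<Rightarrow> 'h \<Rightarrow> 'h \<Rightarrow> bool" where
  "nontrivial_skew_prim sc D g h x \<longleftrightarrow> x \<in> skew_prim sc D g h \<and> x \<notin> {sc c (g - h) | c. True}"

text \<open>Finite-dimensional comodules: an n-dimensional right comodule V = 'k^n with basis
 e_0..e_{n-1} is given by its coefficient matrix C (entries C i j in H, i,j < n),
 coaction rho(e_j) = sum_i e_i \<otimes> C i j.\<close>
definition is_comod ::
  "('k::field \<Rightarrow> 'h::ring_1 \<Rightarrow> 'h) \<Rightarrow> ('h \<Rightarrow> ('h \<times> 'h) list) \<Rightarrow> ('h \<Rightarrow> 'k) \<Rightarrow> nat \<Rightarrow> (nat \<Rightarrow> nat \<Rightarrow> 'h) \<Rightarrow> bool" where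
  "is_comod sc D e n C \<longleftrightarrow> (\<forall>i<n. \<forall>j<n.
      teq sc (D (C i j)) (map (\<lambda>k. (C i k, C k j)) [0..<n]) \<and> e (C i j) = (if i = j then 1 else 0))"

definition mat_inv :: "nat \<Rightarrow> (nat \<Rightarrow> nat \<Rightarrow> 'k::field) \<Rightarrow> (nat \<Rightarrow> nat \<Rightarrow> 'k) \<Rightarrow> bool" where
  "mat_inv n P Q \<longleftrightarrow> (\<forall>i<n. \<forall>j<n.
      (\<Sum>k<n. P i k * Q k j) = (if i = j then 1 else 0) \<and> (\<Sum>k<n. Q i k * P k j) = (if i = j then 1 else 0))"

text \<open>Coefficient matrix of the same comodule with respect to the basis given by the
 columns of Q = P^{-1}:  P C Q.\<close>
definition conj :: "('k::field \<Rightarrow> 'h::ring_1 \<Rightarrow> 'h) \<Rightarrow> nat \<Rightarrow> (nat \<Rightarrow> nat \<Rightarrow> 'k) \<Rightarrow> (nat \<Rightarrow> nat \<Rightarrow> 'k)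
     \<Rightarrow> (nat \<Rightarrow> nat \<Rightarrow> 'h) \<Rightarrow> nat \<Rightarrow> nat \<Rightarrow> 'h" where
  "conj sc n P Q C i j = (\<Sum>k<n. \<Sum>l<n. sc (P i k * Q l j) (C k l))"

definition comod_iso :: "('k::field \<Rightarrow> 'h::ring_1 \<Rightarrow> 'h) \<Rightarrow> nat \<Rightarrow> (nat \<Rightarrow> nat \<Rightarrow> 'h) \<Rightarrow> (nat \<Rightarrow> nat \<Rightarrow> 'h) \<Rightarrow> bool" where
  "comod_iso sc n C C' \<longleftrightarrow> (\<exists>P Q. mat_inv n P Q \<and> (\<forall>i<n. \<forall>j<n. C' i j = conj sc n P Q C i j))"

text \<open>V is a direct sum of two nonzero subcomodules: there is a basis whose first m
 vectors span one summand and the remaining n-m the other, both subcomodules,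
 i.e. the coefficient matrix is block diagonal.\<close>
definition decomposable :: "('k::field \<Rightarrow> 'h::ring_1 \<Rightarrow> 'h) \<Rightarrow> nat \<Rightarrow> (nat \<Rightarrow> nat \<Rightarrow> 'h) \<Rightarrow> bool" where
  "decomposable sc n C \<longleftrightarrow> (\<exists>P Q m. mat_inv n P Q \<and> 0 < m \<and> m < n \<and>
      (\<forall>i<n. \<forall>j<n. (i < m \<longleftrightarrow> m \<le> j) \<longrightarrow> conj sc n P Q C i j = 0))"

definition indecomposable :: "('k::field \<Rightarrow> 'h::ring_1 \<Rightarrow> 'h) \<Rightarrow> nat \<Rightarrow> (nat \<Rightarrow> nat \<Rightarrow> 'h) \<Rightarrow> bool" where
  "indecomposable sc n C \<longleftrightarrow> 0 < n \<and> \<not> decomposable sc n C"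

text \<open>Simple: nonzero and no proper nonzero subcomodule (span of the first m vectors of
 some basis being a subcomodule means the lower-left block vanishes).\<close>
definition simple_comod :: "('k::field \<Rightarrow> 'h::ring_1 \<Rightarrow> 'h) \<Rightarrow> nat \<Rightarrow> (nat \<Rightarrow> nat \<Rightarrow> 'h) \<Rightarrow> bool" where
  "simple_comod sc n C \<longleftrightarrow> 0 < n \<and> \<not> (\<exists>P Q m. mat_inv n P Q \<and> 0 < m \<and> m < n \<and>
      (\<forall>i<n. \<forall>j<n. m \<le> i \<and> j < m \<longrightarrow> conj sc n P Q C i j = 0))"

definition pointed ::
  "('k::field \<Rightarrow> 'h::ring_1 \<Rightarrow> 'h) \<Rightarrow> ('h \<Rightarrow> ('h \<times> 'h) list) \<Rightarrow> ('h \<Rightarrow> 'k) \<Rightarrow> bool" where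
  "pointed sc D e \<longleftrightarrow> (\<forall>n C. is_comod sc D e n C \<and> simple_comod sc n C \<longrightarrow> n = 1)"

text \<open>Dimension vector: d g = multiplicity of the simple comodule K g as composition factor.
 A composition series with one-dimensional factors is a basis in which the coefficient
 matrix is upper triangular; the k-th factor is then K (C' k k).  (Well-definedness is
 Jordan-Hoelder.)\<close>
definition has_dimvec :: "('k::field \<Rightarrow> 'h::ring_1 \<Rightarrow> 'h) \<Rightarrow> nat \<Rightarrow> (nat \<Rightarrow> nat \<Rightarrow> 'h) \<Rightarrow> ('h \<Rightarrow> nat) \<Rightarrow> bool" where
  "has_dimvec sc n C d \<longleftrightarrow> (\<exists>P Q. mat_inv n P Q \<and>
      (\<forall>i<n. \<forall>j<n. j < i \<longrightarrow> conj sc n P Q C i j = 0) \<and>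
      (\<forall>g. d g = card {k. k < n \<and> conj sc n P Q C k k = g}))"

definition discrete_corep_type ::
  "('k::field \<Rightarrow> 'h::ring_1 \<Rightarrow> 'h) \<Rightarrow> ('h \<Rightarrow> ('h \<times> 'h) list) \<Rightarrow> ('h \<Rightarrow> 'k) \<Rightarrow> bool" where
  "discrete_corep_type sc D e \<longleftrightarrow>
     (\<forall>d :: 'h \<Rightarrow> nat. finite {g. d g \<noteq> 0} \<and> (\<forall>g. d g \<noteq> 0 \<longrightarrow> grouplike sc D g) \<longrightarrow>
        finite ((\<lambda>(n, C). {(m, C'). m = n \<and> is_comod sc D e m C' \<and> comod_iso sc m C C'}) `
                {(n, C). is_comod sc D e n C \<and> indecomposable sc n C \<and> has_dimvec sc n C d}))"

end

theory Submission
  imports Defs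
begin

text \<open>
  Suppose ab \<noteq> ba. Then a, b, ab, ba are distinct grouplikes, and multiplying x \<in> P(1,a) and
  y \<in> P(1,b) by grouplikes gives non-trivial skew-primitives ay \<in> P(a,ab), xb \<in> P(b,ab),
  ya \<in> P(a,ba), bx \<in> P(b,ba). They are the coefficients of a family of four-dimensional
  comodules, indexed by a scalar l multiplying ya, all with composition factors a, b, ab, ba.
  A non-trivial element of P(g,h) is linearly independent of g and h, so comparing coefficients
  shows that every comodule map from member l to member l' is a scalar t with t l = t l'.
  Hence the members are indecomposable and pairwise non-isomorphic, and since an algebraically
  closed field is infinite this contradicts discrete corepresentation type.
\<close>

section \<open>Tensor equality\<close>

lemma vector_space_field_mult: "vector_space ((*) :: 'k::field \<Rightarrow> 'k \<Rightarrow> 'k)"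
  by unfold_locales (auto simp: algebra_simps)

lemma (in vector_space) exists_linear_functional_nonzero:
  assumes "v \<noteq> 0"
  shows "\<exists>\<phi>. Vector_Spaces.linear scale (*) \<phi> \<and> \<phi> v \<noteq> 0"
proof -
  interpret vector_space_pair scale "(*) :: 'a \<Rightarrow> 'a \<Rightarrow> 'a"
    by (intro vector_space_pair.intro vector_space_axioms vector_space_field_mult)
  have "independent {v}"
    using assms independent_insert[of v "{}"] by simp
  from linear_independent_extend[OF this, of "\<lambda>_. 1"] show ?thesis
    by auto
qed

definition bilinear_map :: "('k::field \<Rightarrow> 'h::ab_group_add \<Rightarrow> 'h) \<Rightarrow> ('h \<Rightarrow> 'h \<Rightarrow> 'h) \<Rightarrow> bool" where
  "bilinear_map sc F \<longleftrightarrow>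
     (\<forall>u u' v. F (u + u') v = F u v + F u' v) \<and>
     (\<forall>u v v'. F u (v + v') = F u v + F u v') \<and>
     (\<forall>c u v. F (sc c u) v = sc c (F u v) \<and> F u (sc c v) = sc c (F u v))"

lemma linear_sum_list_pairs:
  assumes "Vector_Spaces.linear sc (*) \<phi>"
  shows "\<phi> (\<Sum>(u,v)\<leftarrow>L. F u v) = (\<Sum>(u,v)\<leftarrow>L. \<phi> (F u v))"
proof -
  interpret Vector_Spaces.linear sc "(*)" \<phi> by fact
  show ?thesis by (induction L) (auto simp: add)
qed

text \<open>Linear functionals separate the points of H, so tensor equality, which is tested on
  scalar-valued bilinear forms, can be tested on H-valued bilinear maps as well.\<close>
lemma teq_sum_bilinear_map:
  assumes "vector_space sc" and "teq sc L M" and F: "bilinear_map sc F"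
  shows "(\<Sum>(u,v)\<leftarrow>L. F u v) = (\<Sum>(u,v)\<leftarrow>M. F u v)"
proof (rule ccontr)
  interpret vector_space sc by fact
  assume "\<not> ?thesis"
  then obtain \<phi> where lin: "Vector_Spaces.linear sc (*) \<phi>"
    and ne: "\<phi> ((\<Sum>(u,v)\<leftarrow>L. F u v) - (\<Sum>(u,v)\<leftarrow>M. F u v)) \<noteq> 0"
    using exists_linear_functional_nonzero by (metis right_minus_eq)
  interpret Vector_Spaces.linear sc "(*)" \<phi> by fact
  have "bilin sc (\<lambda>u v. \<phi> (F u v))"
    using F unfolding bilin_def bilinear_map_def by (auto simp: add scale)
  with \<open>teq sc L M\<close> have "(\<Sum>(u,v)\<leftarrow>L. \<phi> (F u v)) = (\<Sum>(u,v)\<leftarrow>M. \<phi> (F u v))"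
    unfolding teq_def by blast
  with ne show False
    by (simp add: diff linear_sum_list_pairs[OF lin])
qed

lemma teq_trans: "teq sc L M \<Longrightarrow> teq sc M N \<Longrightarrow> teq sc L N"
  by (simp add: teq_def)

lemma teq_trans_sums:
  "teq sc L M \<Longrightarrow> (\<And>f. bilin sc f \<Longrightarrow> (\<Sum>(u,v)\<leftarrow>M. f u v) = (\<Sum>(u,v)\<leftarrow>N. f u v)) \<Longrightarrow> teq sc L N"
  by (simp add: teq_def)

lemma bilin_simps:
  assumes "bilin sc f" and "vector_space sc"
  shows "f (sc c u) v = c * f u v" "f u (sc c v) = c * f u v" "f 0 v = 0" "f u 0 = 0"
proof -
  interpret vector_space sc by fact
  show scale: "f (sc c u) v = c * f u v" "f u (sc c v) = c * f u v" for c u v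
    using assms(1) unfolding bilin_def by blast+
  show "f 0 v = 0" "f u 0 = 0"
    using scale(1)[where c=0 and u=0] scale(2)[where c=0 and v=0] by simp_all
qed

lemma teq_Nil_zero_pairs:
  assumes "vector_space sc" and "\<forall>p\<in>set M. fst p = 0 \<or> snd p = 0"
  shows "teq sc [] M"
  unfolding teq_def
proof (intro allI impI)
  fix f assume "bilin sc f"
  then show "(\<Sum>(u,v)\<leftarrow>[]. f u v) = (\<Sum>(u,v)\<leftarrow>M. f u v)"
    using assms(2) by (induction M) (auto simp: bilin_simps[OF _ assms(1)])
qed

lemma sum_list_product_pairs:
  "(\<Sum>(u,v)\<leftarrow>[(u * u', v * v'). (u,v) \<leftarrow> L, (u',v') \<leftarrow> M]. f u v) =
   (\<Sum>(u,v)\<leftarrow>L. \<Sum>(u',v')\<leftarrow>M. f (u * u') (v * v'))"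
proof (induction L)
  case (Cons p L)
  have "(\<Sum>(w,w')\<leftarrow>[(fst p * u', snd p * v'). (u',v') \<leftarrow> M]. f w w') =
        (\<Sum>(u',v')\<leftarrow>M. f (fst p * u') (snd p * v'))"
    by (induction M) auto
  with Cons show ?case
    by (simp add: case_prod_unfold)
qed simp


section \<open>Hopf algebras\<close>

locale hopf =
  fixes sc :: "'k::field \<Rightarrow> 'h::ring_1 \<Rightarrow> 'h" and D :: "'h \<Rightarrow> ('h \<times> 'h) list"
    and e :: "'h \<Rightarrow> 'k" and S :: "'h \<Rightarrow> 'h"
  assumes hopf_algebra: "hopf_algebra sc D e S"
begin

lemma
  shows vector_space: "vector_space sc"
    and D_scale: "teq sc (D (sc c x)) (map (\<lambda>(u,v). (sc c u, v)) (D x))"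
    and D_mult: "teq sc (D (x * y)) [(u * u', v * v'). (u,v) \<leftarrow> D x, (u',v') \<leftarrow> D y]"
    and counit_add: "e (x + y) = e x + e y"
    and counit_scale: "e (sc c x) = c * e x"
    and counit_left: "(\<Sum>(u,v)\<leftarrow>D x. sc (e u) v) = x"
    and counit_one: "e 1 = 1"
    and counit_mult: "e (x * y) = e x * e y"
    and antipode_add: "S (x + y) = S x + S y"
    and antipode_scale: "S (sc c x) = sc c (S x)"
    and antipode_left: "(\<Sum>(u,v)\<leftarrow>D x. S u * v) = sc (e x) 1"
    and antipode_right: "(\<Sum>(u,v)\<leftarrow>D x. u * S v) = sc (e x) 1"
  using hopf_algebra unfolding hopf_algebra_def by - blast+

lemma scale_mult_left: "sc c (x * y) = sc c x * y"
  and scale_mult_right: "sc c (x * y) = x * sc c y"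
  using hopf_algebra unfolding hopf_algebra_def by - fast+

sublocale V: vector_space sc
  by (rule vector_space)

lemma counit_zero: "e 0 = 0"
  using counit_scale[of 0 0] by simp

lemma bilinear_map_counit: "bilinear_map sc (\<lambda>u v. sc (e u) v)"
  unfolding bilinear_map_def
  by (auto simp: counit_add counit_scale V.scale_left_distrib V.scale_right_distrib mult.commute)

lemma bilinear_map_antipode_left: "bilinear_map sc (\<lambda>u v. S u * v)"
  and bilinear_map_antipode_right: "bilinear_map sc (\<lambda>u v. u * S v)"
  unfolding bilinear_map_def
  by (auto simp: antipode_add antipode_scale distrib_left distrib_right
      scale_mult_left[symmetric] scale_mult_right[symmetric])

lemma grouplike_counit:
  assumes "grouplike sc D g"
  shows "e g = 1"
proof -
  have "teq sc (D g) [(g, g)]"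
    using assms by (simp add: grouplike_def)
  from teq_sum_bilinear_map[OF vector_space this bilinear_map_counit] have "g = sc (e g) g"
    by (simp add: counit_left)
  then have "sc (e g - 1) g = 0"
    by (simp add: V.scale_left_diff_distrib)
  with assms show ?thesis
    by (simp add: grouplike_def)
qed

lemma grouplike_antipode:
  assumes "grouplike sc D g"
  shows "S g * g = 1" and "g * S g = 1"
proof -
  have D_g: "teq sc (D g) [(g, g)]"
    using assms by (simp add: grouplike_def)
  show "S g * g = 1"
    using teq_sum_bilinear_map[OF vector_space D_g bilinear_map_antipode_left]
    by (simp add: antipode_left grouplike_counit[OF assms])
  show "g * S g = 1"
    using teq_sum_bilinear_map[OF vector_space D_g bilinear_map_antipode_right]
    by (simp add: antipode_right grouplike_counit[OF assms])
qed

lemma grouplike_cancel_left: "grouplike sc D g \<Longrightarrow> g * u = g * v \<longleftrightarrow> u = v"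
  by (metis grouplike_antipode(1) mult.assoc mult_1_left)

lemma grouplike_cancel_right: "grouplike sc D g \<Longrightarrow> u * g = v * g \<longleftrightarrow> u = v"
  by (metis grouplike_antipode(2) mult.assoc mult_1_right)

lemma skew_prim_counit:
  assumes "z \<in> skew_prim sc D 1 h" and "grouplike sc D h"
  shows "e z = 0"
proof -
  have "teq sc (D z) [(1, z), (z, h)]"
    using assms(1) by (simp add: skew_prim_def)
  from teq_sum_bilinear_map[OF vector_space this bilinear_map_counit] have "z = z + sc (e z) h"
    by (simp add: counit_left counit_one)
  with assms(2) show ?thesis
    by (simp add: grouplike_def)
qed

lemma teq_D_zero: "teq sc (D 0) []"
proof -
  have "teq sc (D (sc 0 0)) (map (\<lambda>(u,v). (sc 0 u, v)) (D 0))"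
    by (rule D_scale)
  moreover have "teq sc [] (map (\<lambda>(u,v). (sc 0 u, v)) (D 0))"
    by (rule teq_Nil_zero_pairs[OF vector_space]) auto
  ultimately show ?thesis
    by (simp add: teq_def)
qed

lemma teq_D_zero_pairs: "\<forall>p\<in>set M. fst p = 0 \<or> snd p = 0 \<Longrightarrow> teq sc (D 0) M"
  using teq_D_zero teq_Nil_zero_pairs[OF vector_space] by (rule teq_trans)

lemma teq_D_scale:
  assumes "teq sc (D z) L"
  shows "teq sc (D (sc c z)) (map (\<lambda>(u,v). (sc c u, v)) L)"
  unfolding teq_def
proof (intro allI impI)
  fix f assume f: "bilin sc f"
  then have "bilin sc (\<lambda>u v. f (sc c u) v)"
    unfolding bilin_def by (auto simp: V.scale_right_distrib mult.left_commute)
  then have "(\<Sum>(u,v)\<leftarrow>D z. f (sc c u) v) = (\<Sum>(u,v)\<leftarrow>L. f (sc c u) v)"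
    using assms unfolding teq_def by blast
  with f D_scale[of c z] show "(\<Sum>(u,v)\<leftarrow>D (sc c z). f u v) = (\<Sum>(u,v)\<leftarrow>map (\<lambda>(u,v). (sc c u, v)) L. f u v)"
    unfolding teq_def by (simp add: case_prod_unfold o_def)
qed

lemma bilin_mult_left:
  assumes "bilin sc f"
  shows "bilin sc (\<lambda>u' v'. f (u * u') (v * v'))"
  using assms unfolding bilin_def by (auto simp: distrib_left scale_mult_right[symmetric])

lemma bilin_sum_mult_right:
  assumes "bilin sc f"
  shows "bilin sc (\<lambda>u v. \<Sum>(u',v')\<leftarrow>M. f (u * u') (v * v'))"
  using assms unfolding bilin_def
  by (induction M) (auto simp: distrib_right distrib_left scale_mult_left[symmetric] algebra_simps)

lemma teq_product_pairs:
  assumes "teq sc L L'" and "teq sc M M'"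
  shows "teq sc [(u * u', v * v'). (u,v) \<leftarrow> L, (u',v') \<leftarrow> M]
                [(u * u', v * v'). (u,v) \<leftarrow> L', (u',v') \<leftarrow> M']"
  unfolding teq_def sum_list_product_pairs
proof (intro allI impI)
  fix f assume f: "bilin sc f"
  have "(\<Sum>(u,v)\<leftarrow>L. \<Sum>(u',v')\<leftarrow>M. f (u * u') (v * v')) =
        (\<Sum>(u,v)\<leftarrow>L. \<Sum>(u',v')\<leftarrow>M'. f (u * u') (v * v'))"
    using assms(2) bilin_mult_left[OF f] unfolding teq_def by (metis (no_types, lifting) case_prod_unfold)
  also have "\<dots> = (\<Sum>(u,v)\<leftarrow>L'. \<Sum>(u',v')\<leftarrow>M'. f (u * u') (v * v'))"
    using assms(1) bilin_sum_mult_right[OF f] unfolding teq_def by blast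
  finally show "(\<Sum>(u,v)\<leftarrow>L. \<Sum>(u',v')\<leftarrow>M. f (u * u') (v * v')) =
        (\<Sum>(u,v)\<leftarrow>L'. \<Sum>(u',v')\<leftarrow>M'. f (u * u') (v * v'))" .
qed

lemma teq_D_mult:
  assumes "teq sc (D p) L" and "teq sc (D q) M"
  shows "teq sc (D (p * q)) [(u * u', v * v'). (u,v) \<leftarrow> L, (u',v') \<leftarrow> M]"
  using D_mult teq_product_pairs[OF assms] by (rule teq_trans)

lemma grouplike_mult:
  assumes "grouplike sc D g" and "grouplike sc D h"
  shows "grouplike sc D (g * h)"
  using assms teq_D_mult[of g "[(g, g)]" h "[(h, h)]"] grouplike_cancel_left[OF assms(1), of h 0]
  by (simp add: grouplike_def)

lemma skew_prim_mult_grouplike: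
  assumes "z \<in> skew_prim sc D g h" and "grouplike sc D k"
  shows "k * z \<in> skew_prim sc D (k * g) (k * h)" and "z * k \<in> skew_prim sc D (g * k) (h * k)"
proof -
  have D_z: "teq sc (D z) [(g, z), (z, h)]" and D_k: "teq sc (D k) [(k, k)]"
    using assms by (simp_all add: skew_prim_def grouplike_def)
  show "k * z \<in> skew_prim sc D (k * g) (k * h)"
    using teq_D_mult[OF D_k D_z] by (simp add: skew_prim_def)
  show "z * k \<in> skew_prim sc D (g * k) (h * k)"
    using teq_D_mult[OF D_z D_k] by (simp add: skew_prim_def)
qed

lemma nontrivial_skew_prim_mult_grouplike:
  assumes "nontrivial_skew_prim sc D g h z" and "grouplike sc D k"
  shows "nontrivial_skew_prim sc D (k * g) (k * h) (k * z)"
    and "nontrivial_skew_prim sc D (g * k) (h * k) (z * k)"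
proof -
  have "k * z \<noteq> sc c (k * g - k * h)" for c
  proof
    assume "k * z = sc c (k * g - k * h)"
    then have "k * z = k * sc c (g - h)"
      by (simp add: scale_mult_right[symmetric] right_diff_distrib)
    with assms show False
      by (simp add: grouplike_cancel_left nontrivial_skew_prim_def)
  qed
  moreover have "z * k \<noteq> sc c (g * k - h * k)" for c
  proof
    assume "z * k = sc c (g * k - h * k)"
    then have "z * k = sc c (g - h) * k"
      by (simp add: scale_mult_left[symmetric] left_diff_distrib)
    with assms show False
      by (simp add: grouplike_cancel_right nontrivial_skew_prim_def)
  qed
  ultimately show "nontrivial_skew_prim sc D (k * g) (k * h) (k * z)"
    and "nontrivial_skew_prim sc D (g * k) (h * k) (z * k)"
    using assms skew_prim_mult_grouplike unfolding nontrivial_skew_prim_def by auto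
qed

lemma nontrivial_skew_prim_coeffs:
  assumes "nontrivial_skew_prim sc D g h z" and "g \<noteq> h"
    and "sc p z + sc q h = sc q g + sc r z"
  shows "q = 0 \<and> p = r"
proof -
  have eq: "sc (p - r) z = sc q (g - h)"
    using assms(3) by (simp add: V.scale_left_diff_distrib V.scale_right_diff_distrib algebra_simps)
  have "p = r"
  proof (rule ccontr)
    assume "p \<noteq> r"
    then have "z = sc (q / (p - r)) (g - h)"
      using eq by (metis V.scale_scale V.scale_one divide_inverse_commute eq_iff_diff_eq_0 left_inverse)
    with assms(1) show False
      unfolding nontrivial_skew_prim_def by blast
  qed
  with eq assms(2) show ?thesis
    by simp
qed

end


section \<open>Comodules as coefficient matrices\<close>

definition mat_mult :: "nat \<Rightarrow> (nat \<Rightarrow> nat \<Rightarrow> 'k::field) \<Rightarrow> (nat \<Rightarrow> nat \<Rightarrow> 'k) \<Rightarrow> nat \<Rightarrow> nat \<Rightarrow> 'k" where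
  "mat_mult n A B i j = (\<Sum>k<n. A i k * B k j)"

definition mat_one :: "nat \<Rightarrow> nat \<Rightarrow> 'k::field" where
  "mat_one i j = (if i = j then 1 else 0)"

definition lmult ::
  "('k::field \<Rightarrow> 'h::ab_group_add \<Rightarrow> 'h) \<Rightarrow> nat \<Rightarrow> (nat \<Rightarrow> nat \<Rightarrow> 'k) \<Rightarrow> (nat \<Rightarrow> nat \<Rightarrow> 'h) \<Rightarrow> nat \<Rightarrow> nat \<Rightarrow> 'h" where
  "lmult sc n A C i j = (\<Sum>k<n. sc (A i k) (C k j))"

definition rmult ::
  "('k::field \<Rightarrow> 'h::ab_group_add \<Rightarrow> 'h) \<Rightarrow> nat \<Rightarrow> (nat \<Rightarrow> nat \<Rightarrow> 'h) \<Rightarrow> (nat \<Rightarrow> nat \<Rightarrow> 'k) \<Rightarrow> nat \<Rightarrow> nat \<Rightarrow> 'h" where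
  "rmult sc n C A i j = (\<Sum>k<n. sc (A k j) (C i k))"

text \<open>For coefficient matrices, colinearity (T \<otimes> id) \<circ> \<rho> = \<rho>' \<circ> T of T reads T C = C' T.\<close>
definition comod_hom ::
  "('k::field \<Rightarrow> 'h::ab_group_add \<Rightarrow> 'h) \<Rightarrow> nat \<Rightarrow> (nat \<Rightarrow> nat \<Rightarrow> 'h) \<Rightarrow> (nat \<Rightarrow> nat \<Rightarrow> 'h)
     \<Rightarrow> (nat \<Rightarrow> nat \<Rightarrow> 'k) \<Rightarrow> bool" where
  "comod_hom sc n C C' T \<longleftrightarrow> (\<forall>i<n. \<forall>j<n. lmult sc n T C i j = rmult sc n C' T i j)"

lemma mat_mult_assoc: "mat_mult n A (mat_mult n B C) i j = mat_mult n (mat_mult n A B) C i j"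
proof -
  have "mat_mult n A (mat_mult n B C) i j = (\<Sum>k<n. \<Sum>l<n. A i k * B k l * C l j)"
    unfolding mat_mult_def by (simp add: sum_distrib_left mult.assoc)
  also have "\<dots> = (\<Sum>l<n. \<Sum>k<n. A i k * B k l * C l j)"
    by (rule sum.swap)
  also have "\<dots> = mat_mult n (mat_mult n A B) C i j"
    unfolding mat_mult_def by (simp add: sum_distrib_right)
  finally show ?thesis .
qed

lemma mat_mult_cong:
  "(\<And>k. k < n \<Longrightarrow> A i k = A' i k) \<Longrightarrow> (\<And>k. k < n \<Longrightarrow> B k j = B' k j) \<Longrightarrow>
   mat_mult n A B i j = mat_mult n A' B' i j"
  unfolding mat_mult_def by (intro sum.cong) auto

lemma mat_mult_one_left: "i < n \<Longrightarrow> mat_mult n mat_one B i j = B i j"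
  by (simp add: mat_mult_def mat_one_def if_distrib[of "\<lambda>x. x * _"] sum.delta cong: if_cong)

lemma mat_mult_one_right: "j < n \<Longrightarrow> mat_mult n A mat_one i j = A i j"
  by (simp add: mat_mult_def mat_one_def if_distrib[of "\<lambda>x. _ * x"] sum.delta' cong: if_cong)

lemma mat_inv_mult:
  assumes "mat_inv n P Q" and "i < n" and "j < n"
  shows "mat_mult n P Q i j = mat_one i j" and "mat_mult n Q P i j = mat_one i j"
  using assms unfolding mat_inv_def mat_mult_def mat_one_def by auto

lemma mat_inv_one: "mat_inv n mat_one mat_one"
  unfolding mat_inv_def mat_mult_def[symmetric] mat_one_def[symmetric]
  by (simp add: mat_mult_one_left)

definition block_projection :: "nat \<Rightarrow> nat \<Rightarrow> nat \<Rightarrow> 'k::field" where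
  "block_projection m i j = (if i = j then if i < m then 1 else 0 else 0)"

context vector_space
begin

lemma lmult_cong:
  "(\<And>k. k < n \<Longrightarrow> A i k = A' i k) \<Longrightarrow> (\<And>k. k < n \<Longrightarrow> C k j = C' k j) \<Longrightarrow>
   lmult scale n A C i j = lmult scale n A' C' i j"
  unfolding lmult_def by (intro sum.cong) auto

lemma rmult_cong:
  "(\<And>k. k < n \<Longrightarrow> A k j = A' k j) \<Longrightarrow> (\<And>k. k < n \<Longrightarrow> C i k = C' i k) \<Longrightarrow>
   rmult scale n C A i j = rmult scale n C' A' i j"
  unfolding rmult_def by (intro sum.cong) auto

lemma lmult_lmult: "lmult scale n A (lmult scale n B C) i j = lmult scale n (mat_mult n A B) C i j"
proof -
  have "lmult scale n A (lmult scale n B C) i j = (\<Sum>k<n. \<Sum>l<n. scale (A i k * B k l) (C l j))"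
    unfolding lmult_def by (simp add: scale_sum_right)
  also have "\<dots> = (\<Sum>l<n. \<Sum>k<n. scale (A i k * B k l) (C l j))"
    by (rule sum.swap)
  also have "\<dots> = lmult scale n (mat_mult n A B) C i j"
    unfolding lmult_def mat_mult_def by (simp add: scale_sum_left)
  finally show ?thesis .
qed

lemma rmult_rmult: "rmult scale n (rmult scale n C A) B i j = rmult scale n C (mat_mult n A B) i j"
proof -
  have "rmult scale n (rmult scale n C A) B i j = (\<Sum>k<n. \<Sum>l<n. scale (A l k * B k j) (C i l))"
    unfolding rmult_def by (simp add: scale_sum_right mult.commute)
  also have "\<dots> = (\<Sum>l<n. \<Sum>k<n. scale (A l k * B k j) (C i l))"
    by (rule sum.swap)
  also have "\<dots> = rmult scale n C (mat_mult n A B) i j"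
    unfolding rmult_def mat_mult_def by (simp add: scale_sum_left)
  finally show ?thesis .
qed

lemma lmult_rmult: "lmult scale n A (rmult scale n C B) i j = rmult scale n (lmult scale n A C) B i j"
proof -
  have "lmult scale n A (rmult scale n C B) i j = (\<Sum>k<n. \<Sum>l<n. scale (A i k * B l j) (C k l))"
    unfolding rmult_def lmult_def by (simp add: scale_sum_right)
  also have "\<dots> = (\<Sum>l<n. \<Sum>k<n. scale (A i k * B l j) (C k l))"
    by (rule sum.swap)
  also have "\<dots> = rmult scale n (lmult scale n A C) B i j"
    unfolding rmult_def lmult_def by (simp add: scale_sum_right mult.commute)
  finally show ?thesis .
qed

lemma lmult_one: "i < n \<Longrightarrow> lmult scale n mat_one C i j = C i j"
  by (simp add: lmult_def mat_one_def if_distrib[of "\<lambda>x. scale x _"] sum.delta cong: if_cong)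

lemma rmult_one: "j < n \<Longrightarrow> rmult scale n C mat_one i j = C i j"
  by (simp add: rmult_def mat_one_def if_distrib[of "\<lambda>x. scale x _"] sum.delta' cong: if_cong)

lemma comod_hom_comp:
  assumes A: "comod_hom scale n C1 C2 A" and B: "comod_hom scale n C2 C3 B"
  shows "comod_hom scale n C1 C3 (mat_mult n B A)"
  unfolding comod_hom_def
proof (intro allI impI)
  fix i j assume ij: "i < n" "j < n"
  have "lmult scale n (mat_mult n B A) C1 i j = lmult scale n B (lmult scale n A C1) i j"
    by (rule lmult_lmult[symmetric])
  also have "\<dots> = lmult scale n B (rmult scale n C2 A) i j"
    using A ij unfolding comod_hom_def by (intro lmult_cong) auto
  also have "\<dots> = rmult scale n (lmult scale n B C2) A i j"
    by (rule lmult_rmult)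
  also have "\<dots> = rmult scale n (rmult scale n C3 B) A i j"
    using B ij unfolding comod_hom_def by (intro rmult_cong) auto
  also have "\<dots> = rmult scale n C3 (mat_mult n B A) i j"
    by (rule rmult_rmult)
  finally show "lmult scale n (mat_mult n B A) C1 i j = rmult scale n C3 (mat_mult n B A) i j" .
qed

lemma comod_hom_block_projection:
  assumes "\<forall>i<n. \<forall>j<n. (i < m \<longleftrightarrow> m \<le> j) \<longrightarrow> C i j = 0"
  shows "comod_hom scale n C C (block_projection m)"
  unfolding comod_hom_def
proof (intro allI impI)
  fix i j assume ij: "i < n" "j < n"
  have "lmult scale n (block_projection m) C i j = (if i < m then C i j else 0)"
    using ij by (simp add: lmult_def block_projection_def if_distrib[of "\<lambda>x. scale x _"] sum.delta
        cong: if_cong)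
  also have "\<dots> = (if j < m then C i j else 0)"
    using assms ij by (metis not_le)
  also have "\<dots> = rmult scale n C (block_projection m) i j"
    using ij by (simp add: rmult_def block_projection_def if_distrib[of "\<lambda>x. scale x _"] sum.delta'
        cong: if_cong)
  finally show "lmult scale n (block_projection m) C i j = rmult scale n C (block_projection m) i j" .
qed

end

lemma conj_eq_lmult_rmult:
  assumes "vector_space sc"
  shows "conj sc n P Q C i j = lmult sc n P (rmult sc n C Q) i j"
proof -
  interpret vector_space sc by fact
  show ?thesis
    unfolding conj_def lmult_def rmult_def by (simp add: scale_sum_right)
qed

lemma conj_mat_one:
  assumes "vector_space sc" and "i < n" and "j < n"
  shows "conj sc n mat_one mat_one C i j = C i j"
proof -
  interpret vector_space sc by fact
  show ?thesis
    using assms(2,3) by (simp add: conj_eq_lmult_rmult[OF assms(1)] lmult_one rmult_one)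
qed

lemma comod_iso_refl: "vector_space sc \<Longrightarrow> comod_iso sc n C C"
  unfolding comod_iso_def by (metis conj_mat_one mat_inv_one)

lemma comod_iso_hom:
  assumes "vector_space sc" and PQ: "mat_inv n P Q"
    and C': "\<forall>i<n. \<forall>j<n. C' i j = conj sc n P Q C i j"
  shows "comod_hom sc n C C' P" and "comod_hom sc n C' C Q"
proof -
  interpret vector_space sc by fact
  show "comod_hom sc n C C' P"
    unfolding comod_hom_def
  proof (intro allI impI)
    fix i j assume ij: "i < n" "j < n"
    have "rmult sc n C' P i j = rmult sc n (lmult sc n P (rmult sc n C Q)) P i j"
      using C' ij by (intro rmult_cong) (auto simp: conj_eq_lmult_rmult[OF assms(1)])
    also have "\<dots> = lmult sc n P (rmult sc n (rmult sc n C Q) P) i j"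
      by (rule lmult_rmult[symmetric])
    also have "\<dots> = lmult sc n P (rmult sc n C (mat_mult n Q P)) i j"
      by (intro lmult_cong refl) (rule rmult_rmult)
    also have "\<dots> = lmult sc n P (rmult sc n C mat_one) i j"
      using PQ ij by (intro lmult_cong rmult_cong refl) (simp add: mat_inv_mult)
    also have "\<dots> = lmult sc n P C i j"
      using ij by (intro lmult_cong refl) (simp add: rmult_one)
    finally show "lmult sc n P C i j = rmult sc n C' P i j" ..
  qed
  show "comod_hom sc n C' C Q"
    unfolding comod_hom_def
  proof (intro allI impI)
    fix i j assume ij: "i < n" "j < n"
    have "lmult sc n Q C' i j = lmult sc n Q (lmult sc n P (rmult sc n C Q)) i j"
      using C' ij by (intro lmult_cong) (auto simp: conj_eq_lmult_rmult[OF assms(1)])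
    also have "\<dots> = lmult sc n (mat_mult n Q P) (rmult sc n C Q) i j"
      by (rule lmult_lmult)
    also have "\<dots> = lmult sc n mat_one (rmult sc n C Q) i j"
      using PQ ij by (intro lmult_cong refl) (simp add: mat_inv_mult)
    also have "\<dots> = rmult sc n C Q i j"
      using ij by (simp add: lmult_one)
    finally show "lmult sc n Q C' i j = rmult sc n C Q i j" .
  qed
qed

text \<open>If C splits along a block decomposition conjugated by P, then Q J P is an endomorphism
  for the block projection J; it is scalar only if J is, which fails for a proper block.\<close>
lemma indecomposableI_scalar_endomorphisms:
  assumes "vector_space sc" and "0 < n"
    and scalar: "\<And>T. comod_hom sc n C C T \<Longrightarrow> \<exists>t. \<forall>i<n. \<forall>j<n. T i j = t * mat_one i j"
  shows "indecomposable sc n C"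
  unfolding indecomposable_def decomposable_def
proof (intro conjI notI \<open>0 < n\<close>, elim exE conjE)
  interpret vector_space sc by fact
  fix P Q m
  assume PQ: "mat_inv n P Q" and m: "0 < m" "m < n"
    and block: "\<forall>i<n. \<forall>j<n. (i < m \<longleftrightarrow> m \<le> j) \<longrightarrow> conj sc n P Q C i j = 0"
  define J :: "nat \<Rightarrow> nat \<Rightarrow> 'a" where "J = block_projection m"
  define E where "E = mat_mult n Q (mat_mult n J P)"
  have "comod_hom sc n C C E"
    unfolding E_def
    using comod_iso_hom[OF assms(1) PQ, of "conj sc n P Q C"]
      comod_hom_block_projection[OF block, folded J_def]
    by (intro comod_hom_comp) auto
  then obtain t where E_scalar: "\<forall>i<n. \<forall>j<n. E i j = t * mat_one i j"
    using scalar by blast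
  have J_scalar: "J i j = t * mat_one i j" if ij: "i < n" "j < n" for i j
  proof -
    have "J i j = mat_mult n J mat_one i j"
      using ij by (simp add: mat_mult_one_right)
    also have "\<dots> = mat_mult n J (mat_mult n P Q) i j"
      using PQ ij by (intro mat_mult_cong refl) (simp add: mat_inv_mult)
    also have "\<dots> = mat_mult n (mat_mult n J P) Q i j"
      by (rule mat_mult_assoc)
    also have "\<dots> = mat_mult n mat_one (mat_mult n (mat_mult n J P) Q) i j"
      using ij by (simp add: mat_mult_one_left)
    also have "\<dots> = mat_mult n (mat_mult n P Q) (mat_mult n (mat_mult n J P) Q) i j"
      using PQ ij by (intro mat_mult_cong refl) (simp add: mat_inv_mult)
    also have "\<dots> = mat_mult n P (mat_mult n Q (mat_mult n (mat_mult n J P) Q)) i j"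
      by (rule mat_mult_assoc[symmetric])
    also have "\<dots> = mat_mult n P (mat_mult n E Q) i j"
      unfolding E_def by (rule mat_mult_cong[OF refl]) (rule mat_mult_assoc)
    also have "\<dots> = t * mat_mult n P Q i j"
      using E_scalar unfolding mat_mult_def
      by (simp add: mat_one_def if_distrib[of "\<lambda>x. _ * x"] sum.delta sum_distrib_left mult_ac
          cong: if_cong)
    finally show ?thesis
      using PQ ij by (simp add: mat_inv_mult)
  qed
  from J_scalar[of 0 0] J_scalar[of "n - 1" "n - 1"] m show False
    by (simp add: J_def block_projection_def mat_one_def split: if_splits)
qed

lemma has_dimvec_upper_triangular:
  assumes "vector_space sc" and "\<forall>i<n. \<forall>j<n. j < i \<longrightarrow> C i j = 0"
  shows "has_dimvec sc n C (\<lambda>g. card {k. k < n \<and> C k k = g})"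
  unfolding has_dimvec_def
  using assms conj_mat_one[OF assms(1)] mat_inv_one
  by (intro exI[of _ mat_one]) (auto intro!: arg_cong[where f = card])

lemma discrete_corep_type_finite_family:
  fixes C :: "'i \<Rightarrow> nat \<Rightarrow> nat \<Rightarrow> 'h::ring_1"
  assumes "discrete_corep_type sc D e" and "vector_space sc"
    and "finite {g. d g \<noteq> 0}" and "\<And>g. d g \<noteq> 0 \<Longrightarrow> grouplike sc D g"
    and "\<And>l. is_comod sc D e n (C l)" and "\<And>l. indecomposable sc n (C l)"
    and "\<And>l. has_dimvec sc n (C l) d"
    and noniso: "\<And>l l'. comod_iso sc n (C l) (C l') \<Longrightarrow> l = l'"
  shows "finite (UNIV :: 'i set)"
proof -
  define cls where
    "cls = (\<lambda>(n, C). {(m, C'). m = n \<and> is_comod sc D e m C' \<and> comod_iso sc m C C'})"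
  define F where "F = (\<lambda>l. cls (n, C l))"
  have "finite (cls ` {(n, C). is_comod sc D e n C \<and> indecomposable sc n C \<and> has_dimvec sc n C d})"
    using assms(1,3,4) unfolding discrete_corep_type_def cls_def by blast
  moreover have "range F \<subseteq>
      cls ` {(n, C). is_comod sc D e n C \<and> indecomposable sc n C \<and> has_dimvec sc n C d}"
    unfolding F_def using assms(5-7) by auto
  ultimately have "finite (range F)"
    by (rule finite_subset[rotated])
  moreover have "inj F"
  proof (rule injI)
    fix l l' assume "F l = F l'"
    moreover have "(n, C l') \<in> F l'"
      unfolding F_def cls_def using assms(5) comod_iso_refl[OF assms(2)] by auto
    ultimately have "(n, C l') \<in> F l"
      by simp
    then have "comod_iso sc n (C l) (C l')"
      by (simp add: F_def cls_def)
    then show "l = l'"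
      by (rule noniso)
  qed
  ultimately show ?thesis
    using finite_imageD by blast
qed


section \<open>Band comodules\<close>

lemma sum_lessThan_4: "(\<Sum>k<(4::nat). f k) = f 0 + f 1 + f 2 + f 3"
  by (simp add: eval_nat_numeral add.assoc)

lemma upt_0_4: "[0..<4] = [0, 1, 2, 3 :: nat]"
  by (simp add: eval_nat_numeral)

lemma less_4_cases: "(i::nat) < 4 \<Longrightarrow> i = 0 \<or> i = 1 \<or> i = 2 \<or> i = 3"
  by auto

locale noncommuting_grouplikes = hopf sc D e S for sc :: "'k::field \<Rightarrow> 'h::ring_1 \<Rightarrow> 'h" and D e S +
  fixes a b x y :: 'h
  assumes grouplike_a: "grouplike sc D a" and grouplike_b: "grouplike sc D b"
    and skew_x: "nontrivial_skew_prim sc D 1 a x" and skew_y: "nontrivial_skew_prim sc D 1 b y"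
    and noncomm: "a * b \<noteq> b * a"
begin

text \<open>The last two basis vectors lie over the grouplikes ab and ba; their coaction has the
  skew-primitives ay \<in> P(a,ab), xb \<in> P(b,ab), ya \<in> P(a,ba) (scaled by l) and bx \<in> P(b,ba)
  as off-diagonal coefficients.\<close>
definition band :: "'k \<Rightarrow> nat \<Rightarrow> nat \<Rightarrow> 'h" where
  "band l i j =
     [[a, 0, a * y, sc l (y * a)],
      [0, b, x * b, b * x],
      [0, 0, a * b, 0],
      [0, 0, 0, b * a]] ! i ! j"

lemma band_entries:
  "band l 0 0 = a" "band l 0 1 = 0" "band l 0 2 = a * y" "band l 0 3 = sc l (y * a)"
  "band l 1 0 = 0" "band l 1 1 = b" "band l 1 2 = x * b" "band l 1 3 = b * x"
  "band l 2 0 = 0" "band l 2 1 = 0" "band l 2 2 = a * b" "band l 2 3 = 0"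
  "band l 3 0 = 0" "band l 3 1 = 0" "band l 3 2 = 0" "band l 3 3 = b * a"
  by (simp_all add: band_def)

declare band_entries [unfolded One_nat_def, simp]

lemma grouplikes_distinct:
  "a \<noteq> b" "a \<noteq> a * b" "a \<noteq> b * a" "b \<noteq> a * b" "b \<noteq> b * a" "a * b \<noteq> b * a"
  using noncomm grouplike_cancel_left[OF grouplike_a, of 1 b] grouplike_cancel_right[OF grouplike_a, of 1 b]
    grouplike_cancel_left[OF grouplike_b, of 1 a] grouplike_cancel_right[OF grouplike_b, of 1 a]
  by auto

lemma grouplike_ab: "grouplike sc D (a * b)"
  and grouplike_ba: "grouplike sc D (b * a)"
  using grouplike_mult grouplike_a grouplike_b by blast+

lemma nontrivial_skew_prim_products:
  "nontrivial_skew_prim sc D a (a * b) (a * y)"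
  "nontrivial_skew_prim sc D b (a * b) (x * b)"
  "nontrivial_skew_prim sc D a (b * a) (y * a)"
  "nontrivial_skew_prim sc D b (b * a) (b * x)"
  using nontrivial_skew_prim_mult_grouplike[OF skew_y grouplike_a]
    nontrivial_skew_prim_mult_grouplike[OF skew_x grouplike_b]
  by simp_all

lemma band_is_comod: "is_comod sc D e 4 (band l)"
  unfolding is_comod_def
proof (intro allI impI conjI)
  fix i j :: nat assume i: "i < 4" and j: "j < 4"
  have "e x = 0" "e y = 0"
    using skew_prim_counit grouplike_a grouplike_b skew_x skew_y
    unfolding nontrivial_skew_prim_def by blast+
  then show "e (band l i j) = (if i = j then 1 else 0)"
    using less_4_cases[OF i] less_4_cases[OF j] grouplike_counit grouplike_a grouplike_b
    by (elim disjE) (simp_all add: counit_zero counit_mult counit_scale)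
  have entries: "teq sc (D a) [(a, a)]" "teq sc (D b) [(b, b)]"
    "teq sc (D (a * b)) [(a * b, a * b)]" "teq sc (D (b * a)) [(b * a, b * a)]"
    "teq sc (D (a * y)) [(a, a * y), (a * y, a * b)]"
    "teq sc (D (x * b)) [(b, x * b), (x * b, a * b)]"
    "teq sc (D (sc l (y * a))) [(sc l a, y * a), (sc l (y * a), b * a)]"
    "teq sc (D (b * x)) [(b, b * x), (b * x, b * a)]"
    using grouplike_a grouplike_b grouplike_ab grouplike_ba nontrivial_skew_prim_products
      teq_D_scale[of "y * a" "[(a, y * a), (y * a, b * a)]" l]
    by (simp_all add: grouplike_def nontrivial_skew_prim_def skew_prim_def)
  show "teq sc (D (band l i j)) (map (\<lambda>k. (band l i k, band l k j)) [0..<4])"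
    using less_4_cases[OF i] less_4_cases[OF j]
    by (elim disjE) (simp_all add: upt_0_4 teq_D_zero_pairs,
        (rule entries[THEN teq_trans_sums], simp add: bilin_simps[OF _ vector_space])+)
qed

text \<open>Each entry of T C = C' T either compares two distinct grouplikes or, for the entries in
  the last two columns, is a linear relation between an arrow z \<in> P(g,h) and g, h.\<close>
lemma band_hom_scalar:
  assumes "comod_hom sc 4 (band l) (band l') T"
  shows "\<forall>i<4. \<forall>j<4. T i j = T 0 0 * mat_one i j" and "T 0 0 * l = T 0 0 * l'"
proof -
  have hom: "lmult sc 4 T (band l) i j = rmult sc 4 (band l') T i j" if "i < 4" "j < 4" for i j
    using assms that unfolding comod_hom_def by blast
  note simps = lmult_def rmult_def sum_lessThan_4
  note distinct = grouplikes_distinct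
  have t20: "T 2 0 = 0" using hom[of 2 0] distinct by (simp add: simps)
  have t30: "T 3 0 = 0" using hom[of 3 0] distinct by (simp add: simps)
  have t21: "T 2 1 = 0" using hom[of 2 1] distinct by (simp add: simps)
  have t31: "T 3 1 = 0" using hom[of 3 1] distinct by (simp add: simps)
  have t32: "T 3 2 = 0" using hom[of 3 2] distinct t30 t31 by (simp add: simps)
  have t23: "T 2 3 = 0" using hom[of 2 3] distinct t20 t21 by (simp add: simps)
  have t10: "T 1 0 = 0" using hom[of 1 0] distinct t20 t30 by (simp add: simps)
  have t01: "T 0 1 = 0" using hom[of 0 1] distinct t21 t31 by (simp add: simps)
  have "sc (T 0 0) (a * y) + sc (T 0 2) (a * b) = sc (T 0 2) a + sc (T 2 2) (a * y)"
    using hom[of 0 2] t01 t32 by (simp add: simps)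
  from nontrivial_skew_prim_coeffs[OF nontrivial_skew_prim_products(1) distinct(2) this]
  have t02: "T 0 2 = 0" and d02: "T 0 0 = T 2 2" by auto
  have "sc (T 1 1) (x * b) + sc (T 1 2) (a * b) = sc (T 1 2) b + sc (T 2 2) (x * b)"
    using hom[of 1 2] t10 t32 by (simp add: simps)
  from nontrivial_skew_prim_coeffs[OF nontrivial_skew_prim_products(2) distinct(4) this]
  have t12: "T 1 2 = 0" and d12: "T 1 1 = T 2 2" by auto
  have "sc (T 0 0 * l) (y * a) + sc (T 0 3) (b * a) = sc (T 0 3) a + sc (T 3 3 * l') (y * a)"
    using hom[of 0 3] t01 t23 by (simp add: simps)
  from nontrivial_skew_prim_coeffs[OF nontrivial_skew_prim_products(3) distinct(3) this]
  have t03: "T 0 3 = 0" and d03: "T 0 0 * l = T 3 3 * l'" by auto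
  have "sc (T 1 1) (b * x) + sc (T 1 3) (b * a) = sc (T 1 3) b + sc (T 3 3) (b * x)"
    using hom[of 1 3] t10 t23 by (simp add: simps)
  from nontrivial_skew_prim_coeffs[OF nontrivial_skew_prim_products(4) distinct(5) this]
  have t13: "T 1 3 = 0" and d13: "T 1 1 = T 3 3" by auto
  show "\<forall>i<4. \<forall>j<4. T i j = T 0 0 * mat_one i j"
  proof (intro allI impI)
    fix i j :: nat assume "i < 4" and "j < 4"
    then show "T i j = T 0 0 * mat_one i j"
      using less_4_cases[OF \<open>i < 4\<close>] less_4_cases[OF \<open>j < 4\<close>]
        t20 t30 t21 t31 t32 t23 t10 t01 t02 t03 t12 t13 d02 d12 d13
      by (elim disjE) (simp_all add: mat_one_def)
  qed
  show "T 0 0 * l = T 0 0 * l'"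
    using d03 d02 d12 d13 by simp
qed

lemma band_indecomposable: "indecomposable sc 4 (band l)"
proof (rule indecomposableI_scalar_endomorphisms[OF vector_space])
  fix T assume "comod_hom sc 4 (band l) (band l) T"
  then show "\<exists>t. \<forall>i<4. \<forall>j<4. T i j = t * mat_one i j"
    using band_hom_scalar(1) by blast
qed simp

lemma band_iso_eq:
  assumes "comod_iso sc 4 (band l) (band l')"
  shows "l = l'"
proof -
  obtain P Q where PQ: "mat_inv 4 P Q" and conj: "\<forall>i<4. \<forall>j<4. band l' i j = conj sc 4 P Q (band l) i j"
    using assms unfolding comod_iso_def by blast
  have hom: "comod_hom sc 4 (band l) (band l') P"
    by (rule comod_iso_hom(1)[OF vector_space PQ conj])
  have "P 0 k = 0" if "0 < k" "k < 4" for k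
    using band_hom_scalar(1)[OF hom, rule_format, of 0 k] that by (simp add: mat_one_def)
  then have "mat_mult 4 P Q 0 0 = P 0 0 * Q 0 0"
    by (simp add: mat_mult_def sum_lessThan_4)
  then have "P 0 0 * Q 0 0 = 1"
    using mat_inv_mult(1)[OF PQ, of 0 0] by (simp add: mat_one_def)
  then have "P 0 0 \<noteq> 0"
    by auto
  with band_hom_scalar(2)[OF hom] show ?thesis
    by simp
qed

definition band_dimvec :: "'h \<Rightarrow> nat" where
  "band_dimvec g = card {k. k < 4 \<and> [a, b, a * b, b * a] ! k = g}"

lemma band_has_dimvec: "has_dimvec sc 4 (band l) band_dimvec"
proof -
  have "has_dimvec sc 4 (band l) (\<lambda>g. card {k. k < 4 \<and> band l k k = g})"
    by (rule has_dimvec_upper_triangular[OF vector_space])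
      (auto dest!: less_4_cases)
  moreover have "{k. k < 4 \<and> band l k k = g} = {k. k < 4 \<and> [a, b, a * b, b * a] ! k = g}" for g
    by (auto dest!: less_4_cases)
  ultimately show ?thesis
    unfolding band_dimvec_def by simp
qed

lemma band_dimvec_support: "{g. band_dimvec g \<noteq> 0} \<subseteq> {a, b, a * b, b * a}"
  unfolding band_dimvec_def by (auto dest!: less_4_cases)

lemma finite_band_dimvec_support: "finite {g. band_dimvec g \<noteq> 0}"
  using band_dimvec_support by (rule finite_subset) simp

lemma band_dimvec_grouplike: "band_dimvec g \<noteq> 0 \<Longrightarrow> grouplike sc D g"
  using band_dimvec_support grouplike_a grouplike_b grouplike_ab grouplike_ba by blast

end

lemma alg_closed_field_infinite: "infinite (UNIV :: 'k::alg_closed_field set)"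
proof
  assume fin: "finite (UNIV :: 'k set)"
  define q :: "'k poly" where "q = (\<Prod>c\<in>UNIV. [:-c, 1:])"
  have "degree q = card (UNIV :: 'k set)"
    unfolding q_def by (subst degree_prod_eq_sum_degree) auto
  then have "degree (q + 1) > 0"
    using fin by (simp add: card_gt_0_iff degree_add_eq_left)
  then obtain z where "poly (q + 1) z = 0"
    using alg_closed_imp_poly_has_root by blast
  moreover have "poly q z = 0"
    unfolding q_def poly_prod using fin by (subst prod_zero_iff) auto
  ultimately show False
    by simp
qed

theorem lemma4p4:
  fixes sc :: "'k::alg_closed_field \<Rightarrow> 'h::ring_1 \<Rightarrow> 'h"
    and D :: "'h \<Rightarrow> ('h \<times> 'h) list" and e :: "'h \<Rightarrow> 'k" and S :: "'h \<Rightarrow> 'h"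
    and a b x y :: 'h
  assumes "hopf_algebra sc D e S"
    and "pointed sc D e"
    and "discrete_corep_type sc D e"
    and "grouplike sc D a" and "grouplike sc D b" and "a \<noteq> b"
    and "nontrivial_skew_prim sc D 1 a x"
    and "nontrivial_skew_prim sc D 1 b y"
  shows "a * b = b * a"
proof (rule ccontr)
  assume "a * b \<noteq> b * a"
  then interpret noncommuting_grouplikes sc D e S a b x y
    using assms by unfold_locales auto
  have "finite (UNIV :: 'k set)"
    by (rule discrete_corep_type_finite_family[OF assms(3) vector_space
          finite_band_dimvec_support band_dimvec_grouplike band_is_comod band_indecomposable
          band_has_dimvec band_iso_eq])
  then show False
    using alg_closed_field_infinite by blast
qed

end
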